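(* Let $\lambda>0$, $\beta\ge\alpha>1$ and $\gamma\ge\alpha/\beta$. Then $$\sum_{i\in\mathbb{N}}\frac{i^{-\alpha}}{(i^{-\beta}+\lambda)^\gamma}\le\lambda^{-\frac{1+\beta\gamma-\alpha}{\beta}}\,2^{1-\frac{\alpha}{\beta}}\int_0^\infty\frac{1}{1+y^\alpha}\,dy.$$ *)

theory Defs
  imports "HOL-Analysis.Analysis"
begin

end

theory Submission
  imports Defs
begin

(* With u = lam x^beta, p = alpha/beta and q = gamma - p, the i-th summand is
   lam^-q u^q / (1 + u)^(p + q) \<le> lam^-q (1 + u)^-p, and concavity of t \<mapsto> t^p gives
   (1 + u)^-p \<le> 2^(1-p) / (1 + u^p).  Since u^p = (lam^(1/beta) i)^alpha, the summand is
   bounded by a multiple of G (h i) with G y = 1 / (1 + y^alpha) and h = lam^(1/beta);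
   as G is decreasing, h G (h i) is at most the integral of G over [h (i - 1), h i]. *)

lemma powr_concave:
  fixes p :: real
  assumes "0 < p" "p \<le> 1"
  shows "concave_on {0<..} (\<lambda>x. x powr p)"
proof (rule f''_le0_imp_concave)
  fix x :: real
  assume "x \<in> {0<..}"
  then show "((\<lambda>x. x powr p) has_real_derivative p * x powr (p - 1)) (at x)"
    and "((\<lambda>x. p * x powr (p - 1)) has_real_derivative p * ((p - 1) * x powr (p - 1 - 1))) (at x)"
    by (auto intro!: derivative_eq_intros)
  show "p * ((p - 1) * x powr (p - 1 - 1)) \<le> 0"
    using assms by (intro mult_nonneg_nonpos mult_nonpos_nonneg) auto
qed auto

lemma one_plus_powr_le:
  fixes p u :: real
  assumes "0 < p" "p \<le> 1" "0 < u"
  shows "1 + u powr p \<le> 2 powr (1 - p) * (1 + u) powr p"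
proof -
  have "(1 - 1/2) * 1 powr p + (1/2) * u powr p \<le> ((1 - 1/2) *\<^sub>R 1 + (1/2) *\<^sub>R u) powr p"
    by (rule concave_onD[OF powr_concave]) (use assms in auto)
  then have "1 + u powr p \<le> 2 * ((1 + u) / 2) powr p"
    by (simp add: field_simps)
  also have "\<dots> = 2 powr (1 - p) * (1 + u) powr p"
    using assms by (simp add: powr_divide powr_diff)
  finally show ?thesis .
qed

lemma powr_div_one_plus_powr_le:
  fixes p q u :: real
  assumes "0 < p" "p \<le> 1" "0 \<le> q" "0 < u"
  shows "u powr q / (1 + u) powr (p + q) \<le> 2 powr (1 - p) / (1 + u powr p)"
proof -
  have "u powr q / (1 + u) powr (p + q) = (u / (1 + u)) powr q / (1 + u) powr p"
    using assms by (simp add: powr_divide powr_add)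
  also have "\<dots> \<le> 1 / (1 + u) powr p"
    using assms by (intro divide_right_mono powr_le1) auto
  also have "\<dots> \<le> 2 powr (1 - p) / (1 + u powr p)"
    using one_plus_powr_le[OF assms(1,2,4)] assms by (simp add: divide_simps add_pos_nonneg)
  finally show ?thesis .
qed

lemma summand_le:
  fixes lam alpha beta gamma x :: real
  assumes "0 < lam" "0 < alpha" "alpha \<le> beta" "alpha / beta \<le> gamma" "0 < x"
  shows "x powr (-alpha) / (x powr (-beta) + lam) powr gamma
     \<le> lam powr (-((beta * gamma - alpha) / beta)) * 2 powr (1 - alpha / beta)
        / (1 + (lam powr (1 / beta) * x) powr alpha)"
proof -
  define p where "p = alpha / beta"
  define q where "q = gamma - p"
  define u where "u = lam * x powr beta"
  have "0 < beta" using assms by linarith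
  then have p: "0 < p" "p \<le> 1" using assms by (auto simp: p_def field_simps)
  have q: "0 \<le> q" using assms by (simp add: q_def p_def)
  have u: "0 < u" using assms by (simp add: u_def)
  have beta_q: "beta * q = beta * gamma - alpha"
    using \<open>0 < beta\<close> by (simp add: q_def p_def algebra_simps)
  have q_eq: "(beta * gamma - alpha) / beta = q"
    using \<open>0 < beta\<close> by (simp add: beta_q[symmetric])
  have u_powr_p: "u powr p = (lam powr (1 / beta) * x) powr alpha"
    using assms \<open>0 < beta\<close> by (simp add: u_def powr_mult powr_powr p_def field_simps)
  have "x powr (-beta) + lam = x powr (-beta) * (1 + u)"
    using assms by (simp add: u_def powr_minus field_simps)
  then have pow_gamma: "(x powr (-beta) + lam) powr gamma = x powr (-beta * gamma) * (1 + u) powr gamma"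
    using assms u by (simp add: powr_mult powr_powr)
  have x_powr: "x powr (beta * q) = u powr q / lam powr q"
    using assms by (simp add: u_def powr_mult powr_powr field_simps)
  have "x powr (-alpha) / (x powr (-beta) + lam) powr gamma = x powr (beta * q) / (1 + u) powr gamma"
    unfolding pow_gamma beta_q using assms by (simp add: powr_diff powr_minus field_simps)
  also have "\<dots> = (u powr q / (1 + u) powr (p + q)) / lam powr q"
    unfolding x_powr by (simp add: q_def)
  also have "\<dots> \<le> (2 powr (1 - p) / (1 + u powr p)) / lam powr q"
    using powr_div_one_plus_powr_le[OF p q u] assms by (intro divide_right_mono) auto
  also have "\<dots> = lam powr (-((beta * gamma - alpha) / beta)) * 2 powr (1 - alpha / beta)
        / (1 + (lam powr (1 / beta) * x) powr alpha)"
    unfolding q_eq u_powr_p by (simp add: p_def powr_minus field_simps)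
  finally show ?thesis .
qed

lemma antimono_sum_le_integral:
  fixes G :: "real \<Rightarrow> real" and h :: real
  assumes "0 < h" and G_int: "G integrable_on {0..}" and G_nonneg: "\<And>y. 0 \<le> y \<Longrightarrow> 0 \<le> G y"
    and G_antimono: "\<And>x y. 0 \<le> x \<Longrightarrow> x \<le> y \<Longrightarrow> G y \<le> G x"
  shows "summable (\<lambda>n. G (h * real (Suc n)))"
    and "h * (\<Sum>n. G (h * real (Suc n))) \<le> integral {0..} G"
proof -
  have G_int_interval: "G integrable_on {a..b}" if "0 \<le> a" for a b
    using integrable_on_subinterval[OF G_int] that by auto
  have partial_le: "h * (\<Sum>n<N. G (h * real (Suc n))) \<le> integral {0..h * real N} G" for N
  proof (induction N)
    case (Suc N)
    have "0 \<le> h * real N"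
      using \<open>0 < h\<close> by simp
    have "h * G (h * real (Suc N)) = integral {h * real N..h * real (Suc N)} (\<lambda>_. G (h * real (Suc N)))"
      using \<open>0 < h\<close> by (simp add: algebra_simps)
    also have "\<dots> \<le> integral {h * real N..h * real (Suc N)} G"
      by (intro integral_le G_int_interval G_antimono) (auto intro: order_trans[OF \<open>0 \<le> h * real N\<close>])
    finally have "h * (\<Sum>n<Suc N. G (h * real (Suc n)))
        \<le> integral {0..h * real N} G + integral {h * real N..h * real (Suc N)} G"
      using Suc.IH by (simp add: distrib_left)
    also have "\<dots> = integral {0..h * real (Suc N)} G"
      using \<open>0 < h\<close> by (intro Henstock_Kurzweil_Integration.integral_combine G_int_interval) auto
    finally show ?case .
  qed simp
  have sums_le: "(\<Sum>n<N. G (h * real (Suc n))) \<le> integral {0..} G / h" for N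
  proof -
    have "integral {0..h * real N} G \<le> integral {0..} G"
      by (intro integral_subset_le G_int_interval G_int) (auto intro: G_nonneg)
    then show ?thesis
      using partial_le[of N] \<open>0 < h\<close> by (simp add: field_simps)
  qed
  show summable: "summable (\<lambda>n. G (h * real (Suc n)))"
    using \<open>0 < h\<close> by (intro summableI_nonneg_bounded[OF _ sums_le] G_nonneg) simp
  have "(\<Sum>n. G (h * real (Suc n))) \<le> integral {0..} G / h"
    by (rule suminf_le_const[OF summable sums_le])
  then show "h * (\<Sum>n. G (h * real (Suc n))) \<le> integral {0..} G"
    using \<open>0 < h\<close> by (simp add: field_simps)
qed

lemma integrable_one_over_one_plus_powr:
  fixes alpha :: real
  assumes "1 < alpha"
  shows "(\<lambda>y::real. 1 / (1 + y powr alpha)) integrable_on {0..}"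
proof (rule integrable_Un')
  have "continuous_on {0..} (\<lambda>y::real. y powr alpha)"
    using assms by (intro continuous_on_powr') (auto intro!: continuous_intros)
  moreover have "1 + y powr alpha \<noteq> 0" for y :: real
    using powr_ge_zero[of y alpha] by linarith
  ultimately have cont: "continuous_on {0..} (\<lambda>y::real. 1 / (1 + y powr alpha))"
    by (intro continuous_on_divide continuous_on_add continuous_on_const) auto
  show "(\<lambda>y::real. 1 / (1 + y powr alpha)) integrable_on {0..1}"
    by (rule integrable_continuous_interval) (rule continuous_on_subset[OF cont], auto)
  show "(\<lambda>y::real. 1 / (1 + y powr alpha)) integrable_on {1..}"
  proof (rule measurable_bounded_by_integrable_imp_integrable)
    show "(\<lambda>y::real. 1 / (1 + y powr alpha)) \<in> borel_measurable (lebesgue_on {1..})"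
      by (rule continuous_imp_measurable_on_sets_lebesgue) (rule continuous_on_subset[OF cont], auto)
    show "(\<lambda>y::real. y powr (-alpha)) integrable_on {1..}"
      using has_integral_powr_to_inf[of "-alpha" 1] assms by (auto simp: integrable_on_def)
    show "norm (1 / (1 + y powr alpha)) \<le> y powr (-alpha)" if "y \<in> {1..}" for y :: real
      using that by (simp add: powr_minus divide_simps add_pos_nonneg)
  qed simp
qed (auto simp: Int_atLeastAtMost)

theorem lemma3:
  fixes lam alpha beta gamma :: real
  assumes "lam > 0" and "alpha > 1" and "beta \<ge> alpha" and "gamma \<ge> alpha / beta"
  shows "summable (\<lambda>n. real (Suc n) powr (-alpha) / (real (Suc n) powr (-beta) + lam) powr gamma)
    \<and> (\<Sum>n. real (Suc n) powr (-alpha) / (real (Suc n) powr (-beta) + lam) powr gamma)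
      \<le> lam powr (-((1 + beta * gamma - alpha) / beta)) * 2 powr (1 - alpha / beta)
         * integral {0..} (\<lambda>y::real. 1 / (1 + y powr alpha))"
proof -
  define f where "f = (\<lambda>n. real (Suc n) powr (-alpha) / (real (Suc n) powr (-beta) + lam) powr gamma)"
  define G where "G y = 1 / (1 + y powr alpha)" for y :: real
  define h where "h = lam powr (1 / beta)"
  define c where "c = lam powr (-((beta * gamma - alpha) / beta)) * 2 powr (1 - alpha / beta)"
  have "0 < h" "0 \<le> c" using assms by (auto simp: h_def c_def)
  have G_antimono: "G y \<le> G x" if "0 \<le> x" "x \<le> y" for x y
  proof -
    have "x powr alpha \<le> y powr alpha"
      using that assms by (intro powr_mono2) auto
    then show ?thesis
      unfolding G_def by (intro divide_left_mono mult_pos_pos add_pos_nonneg) auto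
  qed
  have G_int: "G integrable_on {0..}"
    unfolding G_def using \<open>1 < alpha\<close> by (rule integrable_one_over_one_plus_powr)
  have G_nonneg: "0 \<le> G y" for y
    by (simp add: G_def)
  note G_summable = antimono_sum_le_integral(1)[OF \<open>0 < h\<close> G_int G_nonneg G_antimono]
  note G_sum_le = antimono_sum_le_integral(2)[OF \<open>0 < h\<close> G_int G_nonneg G_antimono]
  have f_le: "f n \<le> c * G (h * real (Suc n))" for n
    using summand_le[of lam alpha beta gamma "real (Suc n)"] assms
    by (simp add: f_def c_def G_def h_def)
  have "summable f"
    by (rule summable_comparison_test[OF _ summable_mult[OF G_summable]])
      (use f_le in \<open>auto simp: f_def\<close>)
  have "(\<Sum>n. f n) \<le> c * (\<Sum>n. G (h * real (Suc n)))"
    using suminf_le[OF f_le \<open>summable f\<close> summable_mult[OF G_summable]] suminf_mult[OF G_summable]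
    by simp
  also have "\<dots> \<le> c / h * integral {0..} G"
    using mult_left_mono[OF G_sum_le \<open>0 \<le> c\<close>] \<open>0 < h\<close> by (simp add: field_simps)
  also have "c / h = lam powr (-((beta * gamma - alpha) / beta) - 1 / beta) * 2 powr (1 - alpha / beta)"
    by (simp add: c_def h_def powr_diff)
  also have "-((beta * gamma - alpha) / beta) - 1 / beta = -((1 + beta * gamma - alpha) / beta)"
    by (simp add: add_divide_distrib diff_divide_distrib)
  finally show ?thesis
    using \<open>summable f\<close> unfolding f_def G_def by simp
qed

end
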